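(* Let $q\ge1$, $L\ge2$, $m=q\frac{L-1}{L}$, and $f\in C^1(\mathbb{R}^n,\mathbb{R})$. Let $w_{1,t},\dots,w_{L,t}\in\mathbb{R}^n$ solve the $L_p$ steepest flow with decoupled weight decay of unit strength $$dw_{i,t}=-\operatorname{sign}(\nabla_{w_i}F(w_t))\odot|\nabla_{w_i}F(w_t)|^{q-1}dt-w_{i,t}\,dt,\qquad F(w)=f\left(\textstyle\prod_iw_i\right),$$ from a balanced initialization ($|w_{i,0}|^q=|w_{j,0}|^q$ for all $i,j$). Let $R$ be separable with $\nabla^2_xR(x)=\operatorname{diag}\left(\frac{1}{L|x_i|^m}\right)$. Then $x_t=\prod_iw_{i,t}$ satisfies $$d\nabla_xR(x_t)=-\operatorname{sign}(\nabla_xf(x_t))\odot|\nabla_xf(x_t)|^{q-1}dt-\nabla_xM_{\mathrm{reg}}(x_t)\,dt,$$ where the on-manifold regularizer $M_{\mathrm{reg}}$ is (up to an additive constant): (a) if $m\neq2$, $M_{\mathrm{reg}}(x)=\frac{L}{L(2-q)+q}\sum_{i\in[n]}|x_i|^{2-q\frac{L-1}{L}}$; (b) if $m=2$, $M_{\mathrm{reg}}(x)=\sum_{i\in[n]}\log(|x_i|)$.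
   Context: All operations are entrywise, $q$ is dual to $p$ ($1/p+1/q=1$). For a separable regularizer $h(x)=\sum_ih_i(x_i)$ and a separable mirror map $R$, the on-manifold regularizer is $M_{\mathrm{reg}}(x)=\sum_{i\in[n]}\int^{x_i}\partial_i^2R_i(s)\,\partial_ih_i(s)\,ds$; decoupled weight decay on the $w_i$ corresponds in $x$ to $\partial_ih_i(x_i)=Lx_i$. *)

theory Defs
  imports "HOL-Analysis.Analysis"
begin

definition sgnpow :: "real \<Rightarrow> real ^ 'n \<Rightarrow> real ^ 'n" where
  "sgnpow q v = (\<chi> k. sgn (v $ k) * \<bar>v $ k\<bar> powr (q - 1))"

definition prodw :: "nat \<Rightarrow> (nat \<Rightarrow> real ^ 'n) \<Rightarrow> real ^ 'n" where
  "prodw L w = (\<chi> k. \<Prod>i<L. w i $ k)"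

definition mexp :: "nat \<Rightarrow> real \<Rightarrow> real" where
  "mexp L q = q * (real L - 1) / real L"

text \<open>On-manifold regularizer M_reg (fixed representative; additive constants are irrelevant
  since only its gradient enters).\<close>
definition Mreg :: "nat \<Rightarrow> real \<Rightarrow> real ^ 'n \<Rightarrow> real" where
  "Mreg L q x =
     (if mexp L q \<noteq> 2
      then real L / (real L * (2 - q) + q) * (\<Sum>i\<in>UNIV. \<bar>x $ i\<bar> powr (2 - q * (real L - 1) / real L))
      else (\<Sum>i\<in>UNIV. ln \<bar>x $ i\<bar>))"

end

theory Submission
  imports Defs
begin

text \<open>
  Fix a coordinate k and write u_i for the k-th entry of w_i, a for the k-th entry of grad f(x) and
  P_i = prod_{j ~= i} u_j, so that x_k = u_i P_i. The gradient of F with respect to u_i is P_i a,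
  hence u_i' = -sgn(P_i a) |P_i a|^(q-1) - u_i, and every h_i = |u_i|^q obeys
  h_i' = -q sgn(x_k a) |x_k a|^(q-1) - q h_i with a forcing term that does not depend on i.
  So balance |u_i|^q = |u_j|^q persists along the flow (for q = 1, where |.| is not differentiable
  at 0, a Darboux argument takes over). Under balance |P_i|^q = |x_k|^m, so the product rule gives
  x_k' = -L (sgn(a) |a|^(q-1) |x_k|^m + x_k); dividing by L |x_k|^m, the Hessian of R, yields the
  mirror-flow equation, and x_k / |x_k|^m is the k-th entry of grad M_reg.
\<close>

definition sgn_powr :: "real \<Rightarrow> real \<Rightarrow> real" where
  "sgn_powr q y = sgn y * \<bar>y\<bar> powr (q - 1)"

lemma sgn_powr_1 [simp]: "sgn_powr 1 y = sgn y"
  by (cases "y = 0") (auto simp: sgn_powr_def)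

lemma sgn_powr_0 [simp]: "sgn_powr q 0 = 0"
  by (simp add: sgn_powr_def)

lemma sgn_powr_mult: "sgn_powr q (x * y) = sgn_powr q x * sgn_powr q y"
  by (simp add: sgn_powr_def sgn_mult abs_mult powr_mult)

lemma sgn_powr_mult_self: "sgn_powr q y * y = \<bar>y\<bar> powr q"
proof (cases "y = 0")
  case False
  then show ?thesis
    by (cases "y > 0") (auto simp: sgn_powr_def powr_diff sgn_real_def)
qed simp

lemma sgnpow_nth [simp]: "sgnpow q v $ k = sgn_powr q (v $ k)"
  by (simp add: sgnpow_def sgn_powr_def)

definition cofactor :: "nat \<Rightarrow> (nat \<Rightarrow> 'a::comm_monoid_mult) \<Rightarrow> nat \<Rightarrow> 'a" where
  "cofactor L u i = (\<Prod>j\<in>{..<L} - {i}. u j)"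

lemma prod_lessThan_eq_mult_cofactor: "i < L \<Longrightarrow> (\<Prod>j<L. u j) = u i * cofactor L u i"
  by (simp add: cofactor_def prod.remove[of "{..<L}" i])

lemma cofactor_cong: "(\<And>j. j < L \<Longrightarrow> j \<noteq> i \<Longrightarrow> u j = v j) \<Longrightarrow> cofactor L u i = cofactor L v i"
  by (auto simp: cofactor_def intro!: prod.cong)

lemma cofactor_eq_0_iff:
  fixes u :: "nat \<Rightarrow> 'a::idom"
  shows "cofactor L u i = 0 \<longleftrightarrow> (\<exists>j<L. j \<noteq> i \<and> u j = 0)"
  by (auto simp: cofactor_def prod_zero_iff)

lemma prodw_nth [simp]: "prodw L w $ k = (\<Prod>i<L. w i $ k)"
  by (simp add: prodw_def)

lemma has_real_derivative_prod_cofactor: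
  assumes "\<And>i. i < L \<Longrightarrow> (u i has_real_derivative u' i) (at t within S)"
  shows "((\<lambda>s. \<Prod>i<L. u i s) has_real_derivative (\<Sum>i<L. u' i * cofactor L (\<lambda>j. u j t) i))
    (at t within S)"
proof -
  have "((\<lambda>s. \<Prod>i<L. u i s) has_derivative (\<lambda>h. \<Sum>i<L. u' i * h * cofactor L (\<lambda>j. u j t) i))
      (at t within S)"
    using has_derivative_prod[of "{..<L}" u "\<lambda>i. (*) (u' i)"] assms
    by (simp add: has_field_derivative_def cofactor_def)
  then show ?thesis
    unfolding has_field_derivative_def
    by (rule has_derivative_eq_rhs)
      (simp add: fun_eq_iff sum_distrib_left sum_distrib_right mult_ac)
qed

text \<open>This is where the exponent m = q (L - 1) / L comes from.\<close>
lemma abs_cofactor_powr_balanced: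
  fixes u :: "nat \<Rightarrow> real"
  assumes i: "i < L" and nz: "\<And>j. j < L \<Longrightarrow> u j \<noteq> 0"
    and bal: "\<And>j. j < L \<Longrightarrow> \<bar>u j\<bar> powr q = \<bar>u i\<bar> powr q"
  shows "\<bar>cofactor L u i\<bar> powr q = \<bar>\<Prod>j<L. u j\<bar> powr mexp L q"
proof -
  define \<beta> where "\<beta> = \<bar>u i\<bar> powr q"
  have "\<beta> > 0" using nz[OF i] by (simp add: \<beta>_def)
  have "\<bar>cofactor L u i\<bar> powr q = (\<Prod>j\<in>{..<L} - {i}. \<beta>)"
    unfolding cofactor_def abs_prod prod_powr_distrib \<beta>_def using bal by (intro prod.cong) auto
  also have "\<dots> = \<beta> powr (real L - 1)"
    using i \<open>\<beta> > 0\<close> by (simp add: of_nat_diff flip: powr_realpow)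
  also have "\<dots> = (\<beta> powr real L) powr ((real L - 1) / real L)"
    using i by (simp add: powr_powr)
  also have "\<beta> powr real L = \<bar>\<Prod>j<L. u j\<bar> powr q"
    unfolding abs_prod prod_powr_distrib \<beta>_def using bal \<open>\<beta> > 0\<close>
    by (simp add: powr_realpow \<beta>_def)
  finally show ?thesis
    by (simp add: mexp_def powr_powr)
qed

lemma has_real_derivative_abs: "y \<noteq> 0 \<Longrightarrow> (abs has_real_derivative sgn y) (at y)"
  using GDERIV_norm[of y] by simp

lemma has_real_derivative_abs_powr:
  fixes y q :: real
  assumes "y \<noteq> 0 \<or> q > 1"
  shows "((\<lambda>z. \<bar>z\<bar> powr q) has_real_derivative q * sgn_powr q y) (at y)"
proof (cases "y = 0")
  case False
  then show ?thesis
    using DERIV_fun_powr[OF has_real_derivative_abs[OF False], of q]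
    by (simp add: sgn_powr_def mult_ac)
next
  case True
  with assms have "q > 1" by simp
  have "((\<lambda>z. \<bar>z\<bar> powr (q - 1)) \<longlongrightarrow> 0) (at (0::real))"
    by (rule tendsto_zero_powrI) (auto intro!: tendsto_eq_intros simp: \<open>q > 1\<close>)
  then have "((\<lambda>z. (\<bar>z\<bar> powr q - \<bar>0\<bar> powr q) / (z - 0)) \<longlongrightarrow> 0) (at (0::real))"
  proof (rule Lim_null_comparison[rotated])
    have "norm ((\<bar>z\<bar> powr q - \<bar>0\<bar> powr q) / (z - 0)) = \<bar>z\<bar> powr (q - 1)" if "z \<noteq> 0" for z :: real
      using that by (simp add: powr_diff abs_mult)
    then show "\<forall>\<^sub>F z in at 0. norm ((\<bar>z\<bar> powr q - \<bar>0\<bar> powr q) / (z - 0)) \<le> \<bar>z\<bar> powr (q - 1)"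
      by (auto intro: eventually_mono[OF eventually_neq_at_within[of 0 0 UNIV]])
  qed
  then show ?thesis
    using True by (simp add: has_field_derivative_iff)
qed

lemma has_real_derivative_ln_abs: "y \<noteq> 0 \<Longrightarrow> ((\<lambda>z. ln \<bar>z\<bar>) has_real_derivative 1 / y) (at y)"
  using DERIV_chain2[OF DERIV_ln has_real_derivative_abs, of y]
  by (cases "y > 0") (auto simp: divide_inverse sgn_real_def)

lemma has_real_derivative_abs_powr_div:
  fixes y e :: real
  assumes "y \<noteq> 0" "e \<noteq> 0"
  shows "((\<lambda>z. \<bar>z\<bar> powr e / e) has_real_derivative y / \<bar>y\<bar> powr (2 - e)) (at y)"
proof -
  have "e * sgn_powr e y / e = y / \<bar>y\<bar> powr (2 - e)"
    using assms
    by (cases "y > 0") (auto simp: sgn_powr_def powr_diff sgn_real_def field_simps power2_eq_square)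
  then show ?thesis
    using DERIV_cdivide[OF has_real_derivative_abs_powr, of y e e] assms by simp
qed

lemma darboux:
  fixes f f' :: "real \<Rightarrow> real"
  assumes ab: "a < b"
    and deriv: "\<And>s. s \<in> {a..b} \<Longrightarrow> (f has_real_derivative f' s) (at s within {a..b})"
    and "f' a < c" "c < f' b"
  shows "\<exists>s\<in>{a<..<b}. f' s = c"
proof -
  define g where "g s = f s - c * s" for s
  have dg: "(g has_real_derivative f' s - c) (at s within {a..b})" if "s \<in> {a..b}" for s
    unfolding g_def using deriv[OF that] by (auto intro!: derivative_eq_intros)
  then have "continuous_on {a..b} g"
    by (meson DERIV_continuous continuous_on_eq_continuous_within)
  then obtain m where m: "m \<in> {a..b}" and min: "\<And>y. y \<in> {a..b} \<Longrightarrow> g m \<le> g y"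
    using continuous_attains_inf[of "{a..b}" g] ab by auto
  define step where "step d = min (d / 2) (b - a)" for d
  have step: "0 < step d" "step d < d" "a + step d \<in> {a..b}" "b - step d \<in> {a..b}" if "d > 0" for d
    using that ab by (auto simp: step_def)
  have "m \<noteq> a"
  proof
    assume "m = a"
    obtain d where "d > 0" and "\<And>h. h > 0 \<Longrightarrow> a + h \<in> {a..b} \<Longrightarrow> h < d \<Longrightarrow> g (a + h) < g a"
      using has_real_derivative_neg_dec_right[OF dg[of a]] \<open>f' a < c\<close> ab by force
    with step[of d] min[of "a + step d"] \<open>m = a\<close> show False by fastforce
  qed
  moreover have "m \<noteq> b"
  proof
    assume "m = b"
    obtain d where "d > 0" and "\<And>h. h > 0 \<Longrightarrow> b - h \<in> {a..b} \<Longrightarrow> h < d \<Longrightarrow> g (b - h) < g b"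
      using has_real_derivative_pos_inc_left[OF dg[of b]] \<open>c < f' b\<close> ab by force
    with step[of d] min[of "b - step d"] \<open>m = b\<close> show False by fastforce
  qed
  ultimately have mi: "a < m" "m < b" using m by auto
  have "(g has_real_derivative f' m - c) (at m)"
    using dg[OF m] at_within_Icc_at[OF mi] by simp
  then have "f' m - c = 0"
    by (rule DERIV_local_min[of _ _ _ "min (m - a) (b - m)"])
      (use mi in \<open>auto intro!: min simp: abs_less_iff\<close>)
  then show ?thesis using mi by auto
qed

lemma sgn_derivative_constant_if_gap:
  fixes f f' :: "real \<Rightarrow> real"
  assumes "a \<le> b"
    and deriv: "\<And>s. s \<in> {a..b} \<Longrightarrow> (f has_real_derivative f' s) (at s within {a..b})"
    and gap: "\<And>s. s \<in> {a..b} \<Longrightarrow> f' s = 0 \<or> 1 \<le> \<bar>f' s\<bar>"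
  shows "sgn (f' a) = sgn (f' b)"
proof (rule ccontr)
  assume ne: "sgn (f' a) \<noteq> sgn (f' b)"
  then have ab: "a < b" using \<open>a \<le> b\<close> by (cases "a = b") auto
  have "f' s \<le> -1 \<or> f' s = 0 \<or> 1 \<le> f' s" if "s \<in> {a..b}" for s
    using gap[OF that] by linarith
  then have "f' a \<le> -1 \<or> f' a = 0 \<or> 1 \<le> f' a" "f' b \<le> -1 \<or> f' b = 0 \<or> 1 \<le> f' b"
    using ab by auto
  then have "\<exists>c\<in>{-1/2, 1/2}. f' a < c \<and> c < f' b \<or> f' b < c \<and> c < f' a"
    using ne by (elim disjE) (auto simp: sgn_real_def intro: exI[of _ "1/2"])
  then obtain c where c: "c \<in> {-1/2, 1/2}" and "f' a < c \<and> c < f' b \<or> f' b < c \<and> c < f' a"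
    by blast
  then obtain s where "s \<in> {a<..<b}" "f' s = c"
  proof (elim disjE conjE)
    assume "f' a < c" "c < f' b"
    then show thesis using darboux[OF ab deriv] that by blast
  next
    assume "f' b < c" "c < f' a"
    then have "\<exists>s\<in>{a<..<b}. - f' s = - c"
      by (intro darboux[OF ab, of "\<lambda>s. - f s"]) (auto intro!: derivative_eq_intros deriv)
    then show thesis using that by auto
  qed
  with gap[of s] c show False by auto
qed

lemma GDERIV_unique:
  assumes "GDERIV F x :> g1" "GDERIV F x :> g2"
  shows "g1 = g2"
proof -
  have "(\<lambda>h. h \<bullet> g1) = (\<lambda>h. h \<bullet> g2)"
    using has_derivative_unique assms unfolding gderiv_def by blast
  then have "(g1 - g2) \<bullet> (g1 - g2) = 0"
    by (metis inner_diff_right right_minus_eq)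
  then show ?thesis by simp
qed

lemma GDERIV_sum_vec_nth:
  fixes x :: "real ^ 'n" and \<phi> :: "'n \<Rightarrow> real \<Rightarrow> real"
  assumes "\<And>k. (\<phi> k has_real_derivative d k) (at (x $ k))"
  shows "GDERIV (\<lambda>y. \<Sum>k\<in>UNIV. \<phi> k (y $ k)) x :> (\<chi> k. d k)"
proof -
  have "((\<lambda>y. \<phi> k (y $ k)) has_derivative (\<lambda>h. h $ k * d k)) (at x)" for k
    using DERIV_compose_FDERIV[OF assms bounded_linear_imp_has_derivative[OF bounded_linear_vec_nth]] .
  then have "((\<lambda>y. \<Sum>k\<in>UNIV. \<phi> k (y $ k)) has_derivative (\<lambda>h. \<Sum>k\<in>UNIV. h $ k * d k)) (at x)"
    by (intro has_derivative_sum) auto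
  then show ?thesis
    by (simp add: gderiv_def inner_vec_def)
qed

lemma has_vector_derivative_vec_nth_iff:
  fixes F :: "real \<Rightarrow> real ^ 'n"
  shows "(F has_vector_derivative F') (at t within S) \<longleftrightarrow>
    (\<forall>k. ((\<lambda>s. F s $ k) has_real_derivative F' $ k) (at t within S))"
proof -
  have "(\<lambda>x. x * c) = (*) c" for c :: real by (auto simp: fun_eq_iff)
  then show ?thesis
    unfolding has_vector_derivative_def has_field_derivative_def
    by (subst has_derivative_componentwise_within) (auto simp: Basis_vec_def inner_axis)
qed

lemma Mreg_gradient:
  fixes x :: "real ^ 'n"
  assumes L: "L \<ge> 1" and nz: "\<And>k. x $ k \<noteq> 0"
  shows "GDERIV (Mreg L q) x :> (\<chi> k. x $ k / \<bar>x $ k\<bar> powr mexp L q)"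
proof (cases "mexp L q = 2")
  case True
  have "Mreg L q = (\<lambda>y :: real ^ 'n. \<Sum>k\<in>UNIV. ln \<bar>y $ k\<bar>)"
    using True by (auto simp: Mreg_def fun_eq_iff)
  moreover have "(\<chi> k. 1 / x $ k) = (\<chi> k. x $ k / \<bar>x $ k\<bar> powr mexp L q)"
    using nz True by (simp add: vec_eq_iff power2_eq_square)
  ultimately show ?thesis
    using GDERIV_sum_vec_nth[OF has_real_derivative_ln_abs[OF nz]] by simp
next
  case False
  define e where "e = 2 - mexp L q"
  have e: "e = (real L * (2 - q) + q) / real L"
    using L by (simp add: e_def mexp_def field_simps)
  with False L have "e \<noteq> 0" by (auto simp: e_def)
  have "Mreg L q = (\<lambda>y :: real ^ 'n. \<Sum>k\<in>UNIV. \<bar>y $ k\<bar> powr e / e)"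
    using False L unfolding Mreg_def e
    by (auto simp: fun_eq_iff sum_distrib_left mexp_def field_simps)
  moreover have "mexp L q = 2 - e" by (simp add: e_def)
  ultimately show ?thesis
    using GDERIV_sum_vec_nth[OF has_real_derivative_abs_powr_div[OF nz \<open>e \<noteq> 0\<close>]] by simp
qed

lemma GDERIV_prodw_factor:
  fixes f :: "real ^ 'n \<Rightarrow> real" and w :: "nat \<Rightarrow> real ^ 'n"
  assumes "GDERIV f (prodw L w) :> Df" and "i < L"
  shows "GDERIV (\<lambda>v. f (prodw L (w(i := v)))) (w i) :> (\<chi> k. cofactor L (\<lambda>j. w j $ k) i * Df $ k)"
proof -
  define l where "l v = (\<chi> k. v $ k * cofactor L (\<lambda>j. w j $ k) i)" for v :: "real ^ 'n"
  have prodw_upd: "prodw L (w(i := v)) = l v" for v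
  proof -
    have "cofactor L (\<lambda>j. (w(i := v)) j $ k) i = cofactor L (\<lambda>j. w j $ k) i" for k
      by (rule cofactor_cong) simp
    then show ?thesis
      using \<open>i < L\<close> by (simp add: prodw_def l_def vec_eq_iff prod_lessThan_eq_mult_cofactor[of i L])
  qed
  have "linear l"
    by (auto simp: linear_iff l_def vec_eq_iff algebra_simps)
  then have "(l has_derivative l) (at (w i))"
    by (simp add: bounded_linear_imp_has_derivative linear_conv_bounded_linear)
  moreover have "l (w i) = prodw L w"
    using prodw_upd[of "w i"] by simp
  ultimately have "((\<lambda>v. f (l v)) has_derivative (\<lambda>h. l h \<bullet> Df)) (at (w i))"
    using assms(1) has_derivative_compose unfolding gderiv_def by fastforce
  moreover have "(\<lambda>h. l h \<bullet> Df) = (\<lambda>h. h \<bullet> (\<chi> k. cofactor L (\<lambda>j. w j $ k) i * Df $ k))"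
    by (auto simp: inner_vec_def l_def algebra_simps)
  ultimately show ?thesis
    by (simp add: gderiv_def prodw_upd)
qed

text \<open>One coordinate of the factor flow: u i s is the coordinate of w_i at time s and a s the
  corresponding coordinate of grad f at the product.\<close>
locale factor_flow =
  fixes L :: nat and q :: real and u :: "nat \<Rightarrow> real \<Rightarrow> real" and a :: "real \<Rightarrow> real"
    and S :: "real set"
  assumes factor_deriv: "\<And>i s. i < L \<Longrightarrow> s \<in> S \<Longrightarrow>
    (u i has_real_derivative - sgn_powr q (cofactor L (\<lambda>j. u j s) i * a s) - u i s) (at s within S)"
begin

lemma abs_powr_factor_deriv:
  assumes "i < L" "s \<in> S" "u i s \<noteq> 0 \<or> q > 1"
  shows "((\<lambda>s. \<bar>u i s\<bar> powr q) has_real_derivative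
      - q * sgn_powr q ((\<Prod>j<L. u j s) * a s) - q * \<bar>u i s\<bar> powr q) (at s within S)"
proof -
  define y where "y = u i s"
  define c where "c = cofactor L (\<lambda>j. u j s) i * a s"
  have "((\<lambda>s. \<bar>u i s\<bar> powr q) has_real_derivative q * sgn_powr q y * (- sgn_powr q c - y))
      (at s within S)"
    unfolding y_def c_def
    by (rule DERIV_chain2[OF has_real_derivative_abs_powr[OF assms(3)] factor_deriv[OF assms(1,2)]])
  moreover have "q * sgn_powr q y * (- sgn_powr q c - y)
      = - q * sgn_powr q (y * c) - q * (sgn_powr q y * y)"
    by (simp add: sgn_powr_mult algebra_simps)
  moreover have "y * c = (\<Prod>j<L. u j s) * a s"
    using prod_lessThan_eq_mult_cofactor[OF assms(1), of "\<lambda>j. u j s"] by (simp add: y_def c_def)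
  ultimately show ?thesis
    by (simp add: sgn_powr_mult_self y_def)
qed

lemma balance_preserved_regular:
  assumes "{0..t} \<subseteq> S" "0 \<le> t" "i < L" "j < L"
    and regular: "\<And>k s. k < L \<Longrightarrow> s \<in> {0..t} \<Longrightarrow> u k s \<noteq> 0 \<or> q > 1"
    and "\<bar>u i 0\<bar> powr q = \<bar>u j 0\<bar> powr q"
  shows "\<bar>u i t\<bar> powr q = \<bar>u j t\<bar> powr q"
proof -
  \<comment> \<open>exp (q s) is the integrating factor of h' = -q X - q h, whose forcing X is common to all i.\<close>
  define \<delta> where "\<delta> s = exp (q * s) * (\<bar>u i s\<bar> powr q - \<bar>u j s\<bar> powr q)" for s
  have "(\<delta> has_real_derivative 0) (at s within {0..t})" if s: "s \<in> {0..t}" for s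
  proof -
    define X where "X = sgn_powr q ((\<Prod>j<L. u j s) * a s)"
    have "((\<lambda>s. exp (q * s)) has_real_derivative exp (q * s) * q) (at s within S)"
      by (auto intro!: derivative_eq_intros)
    from DERIV_mult[OF this DERIV_diff[OF abs_powr_factor_deriv abs_powr_factor_deriv]]
    have "(\<delta> has_real_derivative exp (q * s) * q * (\<bar>u i s\<bar> powr q - \<bar>u j s\<bar> powr q)
        + ((- q * X - q * \<bar>u i s\<bar> powr q) - (- q * X - q * \<bar>u j s\<bar> powr q)) * exp (q * s))
        (at s within S)"
      unfolding \<delta>_def X_def using assms s by auto
    then show ?thesis
      by (rule DERIV_subset[OF _ \<open>{0..t} \<subseteq> S\<close>, THEN DERIV_cong]) (simp add: algebra_simps)
  qed
  then have "\<delta> t = \<delta> 0"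
    using has_field_derivative_zero_constant[of "{0..t}" \<delta>] \<open>0 \<le> t\<close> by fastforce
  with assms show ?thesis by (simp add: \<delta>_def)
qed

lemma cofactor_sign_constant_q1:
  assumes "q = 1" "{0..t} \<subseteq> S" "i < L" "s \<in> {0..t}"
  shows "sgn (cofactor L (\<lambda>j. u j s) i * a s) = sgn (cofactor L (\<lambda>j. u j t) i * a t)"
proof -
  define \<sigma> where "\<sigma> r = sgn (cofactor L (\<lambda>j. u j r) i * a r)" for r
  have "{s..t} \<subseteq> S" using assms(2,4) by auto
  have "((\<lambda>r. exp r * u i r) has_real_derivative - exp r * \<sigma> r) (at r within {s..t})"
    if "r \<in> {s..t}" for r
  proof -
    have "((\<lambda>r. exp r * u i r) has_real_derivative
        exp r * u i r + (- \<sigma> r - u i r) * exp r) (at r within S)"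
      using factor_deriv[OF \<open>i < L\<close>, of r] \<open>{s..t} \<subseteq> S\<close> that \<open>q = 1\<close>
      by (auto intro!: derivative_eq_intros simp: \<sigma>_def)
    then show ?thesis
      by (rule DERIV_subset[OF _ \<open>{s..t} \<subseteq> S\<close>, THEN DERIV_cong]) (simp add: algebra_simps)
  qed
  \<comment> \<open>A derivative has the intermediate value property, but this one skips the interval (-1, 1)
    except for 0, because exp r \<ge> 1 on [0, t].\<close>
  moreover have "- exp r * \<sigma> r = 0 \<or> 1 \<le> \<bar>- exp r * \<sigma> r\<bar>" if "r \<in> {s..t}" for r
    using that assms(4) by (auto simp: \<sigma>_def sgn_real_def abs_mult)
  ultimately have "sgn (- exp s * \<sigma> s) = sgn (- exp t * \<sigma> t)"
    using assms(4) by (intro sgn_derivative_constant_if_gap) auto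
  then show ?thesis
    by (simp add: \<sigma>_def sgn_mult)
qed

text \<open>For q = 1 the forcing sgn(P_i a) has constant sign on [0, t]: either it vanishes and every
  factor simply decays like exp(-s), or no factor ever passes through 0 and the smooth argument
  applies.\<close>
lemma balance_preserved_q1:
  assumes "q = 1" "{0..t} \<subseteq> S" "0 \<le> t" "L \<ge> 2" "i < L" "j < L"
    and nz: "\<And>k. k < L \<Longrightarrow> u k t \<noteq> 0"
    and bal0: "\<And>k l. k < L \<Longrightarrow> l < L \<Longrightarrow> \<bar>u k 0\<bar> = \<bar>u l 0\<bar>"
  shows "\<bar>u i t\<bar> = \<bar>u j t\<bar>"
proof (cases "a t = 0")
  case True
  have decay: "exp t * u k t = u k 0" if "k < L" for k
  proof -
    have "((\<lambda>r. exp r * u k r) has_real_derivative 0) (at r within {0..t})" if "r \<in> {0..t}" for r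
    proof -
      have "sgn (cofactor L (\<lambda>j. u j r) k * a r) = 0"
        using cofactor_sign_constant_q1[OF assms(1,2) \<open>k < L\<close> that] True by simp
      then show ?thesis
        using factor_deriv[OF \<open>k < L\<close>, of r] assms(1,2) that
        by (auto intro!: derivative_eq_intros DERIV_subset[OF _ assms(2)])
    qed
    then obtain c where "\<And>r. r \<in> {0..t} \<Longrightarrow> exp r * u k r = c"
      using has_field_derivative_zero_constant[of "{0..t}" "\<lambda>r. exp r * u k r"] by auto
    from this[of t] this[of 0] \<open>0 \<le> t\<close> show ?thesis by simp
  qed
  then have "exp t * \<bar>u k t\<bar> = \<bar>u k 0\<bar>" if "k < L" for k
    using arg_cong[where f = abs, OF decay[OF that]] by (simp add: abs_mult)
  from this[OF \<open>i < L\<close>] this[OF \<open>j < L\<close>] bal0[OF \<open>i < L\<close> \<open>j < L\<close>]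
  have "exp t * \<bar>u i t\<bar> = exp t * \<bar>u j t\<bar>" by simp
  then show ?thesis by simp
next
  case False
  have "u l s \<noteq> 0" if "l < L" "s \<in> {0..t}" for l s
  proof -
    obtain k where "k < L" "k \<noteq> l"
      using that[of "if l = 0 then 1 else 0"] \<open>L \<ge> 2\<close> by (auto split: if_splits)
    have "cofactor L (\<lambda>j. u j t) k * a t \<noteq> 0"
      using nz False by (simp add: cofactor_eq_0_iff)
    then have "cofactor L (\<lambda>j. u j s) k \<noteq> 0"
      using cofactor_sign_constant_q1[OF assms(1,2) \<open>k < L\<close> \<open>s \<in> {0..t}\<close>] by (auto simp: sgn_0_0)
    with \<open>l < L\<close> \<open>k \<noteq> l\<close> show ?thesis by (auto simp: cofactor_eq_0_iff)
  qed
  then have "\<bar>u i t\<bar> powr q = \<bar>u j t\<bar> powr q"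
    using \<open>q = 1\<close> bal0[OF \<open>i < L\<close> \<open>j < L\<close>]
    by (intro balance_preserved_regular[OF assms(2,3,5,6)]) auto
  with \<open>q = 1\<close> show ?thesis by simp
qed

lemma balance_preserved:
  assumes "q \<ge> 1" "{0..t} \<subseteq> S" "0 \<le> t" "L \<ge> 2" "i < L" "j < L"
    and nz: "\<And>k. k < L \<Longrightarrow> u k t \<noteq> 0"
    and bal0: "\<And>k l. k < L \<Longrightarrow> l < L \<Longrightarrow> \<bar>u k 0\<bar> powr q = \<bar>u l 0\<bar> powr q"
  shows "\<bar>u i t\<bar> powr q = \<bar>u j t\<bar> powr q"
proof (cases "q = 1")
  case True
  have "\<bar>u k 0\<bar> = \<bar>u l 0\<bar>" if "k < L" "l < L" for k l
    using bal0[OF that] True by simp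
  then have "\<bar>u i t\<bar> = \<bar>u j t\<bar>"
    by (rule balance_preserved_q1[OF True assms(2-6) nz, rotated]) simp_all
  with True show ?thesis by simp
next
  case False
  show ?thesis
    by (rule balance_preserved_regular[OF assms(2,3,5,6) _ bal0[OF assms(5,6)]])
      (use assms(1) False in simp)
qed

lemma product_mirror_flow:
  fixes \<phi> :: "real \<Rightarrow> real" and t :: real
  defines "x \<equiv> \<Prod>i<L. u i t"
  assumes "t \<in> S" "L \<ge> 1"
    and nz: "\<And>i. i < L \<Longrightarrow> u i t \<noteq> 0"
    and bal: "\<And>i j. i < L \<Longrightarrow> j < L \<Longrightarrow> \<bar>u i t\<bar> powr q = \<bar>u j t\<bar> powr q"
    and \<phi>: "(\<phi> has_real_derivative 1 / (real L * \<bar>x\<bar> powr mexp L q)) (at x)"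
  shows "((\<lambda>s. \<phi> (\<Prod>i<L. u i s)) has_real_derivative
      - sgn_powr q (a t) - x / \<bar>x\<bar> powr mexp L q) (at t within S)"
proof -
  define P where "P i = cofactor L (\<lambda>j. u j t) i" for i
  have "(- sgn_powr q (P i * a t) - u i t) * P i = - sgn_powr q (a t) * \<bar>x\<bar> powr mexp L q - x"
    if "i < L" for i
  proof -
    have "sgn_powr q (P i * a t) * P i = sgn_powr q (a t) * \<bar>P i\<bar> powr q"
      by (simp add: sgn_powr_mult sgn_powr_mult_self flip: mult.assoc)
    also have "\<bar>P i\<bar> powr q = \<bar>x\<bar> powr mexp L q"
      unfolding P_def x_def by (intro abs_cofactor_powr_balanced that nz bal)
    finally show ?thesis
      using prod_lessThan_eq_mult_cofactor[OF that, of "\<lambda>j. u j t"]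
      by (simp add: x_def P_def algebra_simps)
  qed
  then have "(\<Sum>i<L. (- sgn_powr q (P i * a t) - u i t) * P i)
      = real L * (- sgn_powr q (a t) * \<bar>x\<bar> powr mexp L q - x)"
    by simp
  moreover have "x \<noteq> 0"
    using nz by (simp add: x_def)
  ultimately have slope: "1 / (real L * \<bar>x\<bar> powr mexp L q)
      * (\<Sum>i<L. (- sgn_powr q (P i * a t) - u i t) * P i)
      = - sgn_powr q (a t) - x / \<bar>x\<bar> powr mexp L q"
    using \<open>L \<ge> 1\<close> by (simp add: field_simps)
  have "((\<lambda>s. \<Prod>i<L. u i s) has_real_derivative
      (\<Sum>i<L. (- sgn_powr q (P i * a t) - u i t) * P i)) (at t within S)"
    unfolding P_def by (intro has_real_derivative_prod_cofactor factor_deriv \<open>t \<in> S\<close>)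
  from DERIV_chain2[OF \<phi>[unfolded x_def] this, folded x_def] show ?thesis
    unfolding slope .
qed

end

lemma factor_flow_coordinate:
  fixes f :: "real ^ 'n \<Rightarrow> real" and w :: "nat \<Rightarrow> real \<Rightarrow> real ^ 'n"
  assumes f_grad: "\<And>x. GDERIV f x :> Df x"
    and flow: "\<And>i t. i < L \<Longrightarrow> t \<in> D \<Longrightarrow>
        \<exists>g. (GDERIV (\<lambda>v. f (prodw L ((\<lambda>j. w j t)(i := v)))) (w i t) :> g) \<and>
            (w i has_vector_derivative (- sgnpow q g - w i t)) (at t within D)"
  shows "factor_flow L q (\<lambda>i s. w i s $ k) (\<lambda>s. Df (prodw L (\<lambda>i. w i s)) $ k) D"
proof
  fix i s assume "i < L" "s \<in> D"
  with flow obtain g where g: "GDERIV (\<lambda>v. f (prodw L ((\<lambda>j. w j s)(i := v)))) (w i s) :> g"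
    and w_deriv: "(w i has_vector_derivative (- sgnpow q g - w i s)) (at s within D)"
    by blast
  have "g = (\<chi> k. cofactor L (\<lambda>j. w j s $ k) i * Df (prodw L (\<lambda>i. w i s)) $ k)"
    by (rule GDERIV_unique[OF g GDERIV_prodw_factor[OF f_grad \<open>i < L\<close>]])
  with w_deriv show "((\<lambda>s. w i s $ k) has_real_derivative
      - sgn_powr q (cofactor L (\<lambda>j. w j s $ k) i * Df (prodw L (\<lambda>i. w i s)) $ k) - w i s $ k)
      (at s within D)"
    by (simp add: has_vector_derivative_vec_nth_iff)
qed

theorem theorem4:
  fixes q :: real and L :: nat
    and f :: "real ^ 'n \<Rightarrow> real" and Df :: "real ^ 'n \<Rightarrow> real ^ 'n"
    and w :: "nat \<Rightarrow> real \<Rightarrow> real ^ 'n"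
    and T :: ereal
    and R :: "real ^ 'n \<Rightarrow> real" and Rk dR :: "'n \<Rightarrow> real \<Rightarrow> real"
  defines "D \<equiv> {t::real. 0 \<le> t \<and> ereal t < T}"
  assumes q: "q \<ge> 1" and L: "L \<ge> 2"
    and f_grad: "\<And>x. GDERIV f x :> Df x" and f_C1: "continuous_on UNIV Df"
    and T: "0 < T"
    and flow: "\<And>i t. i < L \<Longrightarrow> t \<in> D \<Longrightarrow>
        \<exists>g. (GDERIV (\<lambda>v. f (prodw L ((\<lambda>j. w j t)(i := v)))) (w i t) :> g) \<and>
            (w i has_vector_derivative (- sgnpow q g - w i t)) (at t within D)"
    and balanced: "\<And>i j k. i < L \<Longrightarrow> j < L \<Longrightarrow>
        \<bar>w i 0 $ k\<bar> powr q = \<bar>w j 0 $ k\<bar> powr q"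
    and R_sep: "\<And>x. R x = (\<Sum>k\<in>UNIV. Rk k (x $ k))"
    and R_d1: "\<And>k s. s \<noteq> 0 \<Longrightarrow> (Rk k has_real_derivative dR k s) (at s)"
    and R_d2: "\<And>k s. s \<noteq> 0 \<Longrightarrow>
        (dR k has_real_derivative 1 / (real L * \<bar>s\<bar> powr mexp L q)) (at s)"
  shows "\<forall>t\<in>D. (\<forall>k. prodw L (\<lambda>i. w i t) $ k \<noteq> 0) \<longrightarrow>
          (\<exists>G. (GDERIV (Mreg L q) (prodw L (\<lambda>i. w i t)) :> G) \<and>
               ((\<lambda>s. \<chi> k. dR k (prodw L (\<lambda>i. w i s) $ k)) has_vector_derivative
                  (- sgnpow q (Df (prodw L (\<lambda>i. w i t))) - G)) (at t within D))"
proof (intro ballI impI)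
  fix t assume "t \<in> D" and nz: "\<forall>k. prodw L (\<lambda>i. w i t) $ k \<noteq> 0"
  define x where "x s = prodw L (\<lambda>i. w i s)" for s
  have flow_k: "factor_flow L q (\<lambda>i s. w i s $ k) (\<lambda>s. Df (x s) $ k) D" for k
    unfolding x_def using f_grad flow by (rule factor_flow_coordinate)
  have t: "0 \<le> t" "{0..t} \<subseteq> D"
    using \<open>t \<in> D\<close> by (auto simp: D_def intro: order.strict_trans1[of "ereal _" "ereal t" T])
  have w_nz: "w i t $ k \<noteq> 0" if "i < L" for i k
    using nz that by auto
  have bal: "\<bar>w i t $ k\<bar> powr q = \<bar>w j t $ k\<bar> powr q" if "i < L" "j < L" for i j k
    by (rule factor_flow.balance_preserved[OF flow_k q t(2,1) L that w_nz balanced])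
  have x_nth: "x s $ k = (\<Prod>i<L. w i s $ k)" for s k
    by (simp add: x_def)
  have "((\<lambda>s. dR k (x s $ k)) has_real_derivative
      - sgn_powr q (Df (x t) $ k) - x t $ k / \<bar>x t $ k\<bar> powr mexp L q) (at t within D)" for k
    unfolding x_nth
    by (rule factor_flow.product_mirror_flow[OF flow_k \<open>t \<in> D\<close> _ w_nz bal R_d2])
      (use L nz in auto)
  moreover have "GDERIV (Mreg L q) (x t) :> (\<chi> k. x t $ k / \<bar>x t $ k\<bar> powr mexp L q)"
    using nz L by (intro Mreg_gradient) (auto simp: x_def)
  ultimately show "\<exists>G. (GDERIV (Mreg L q) (prodw L (\<lambda>i. w i t)) :> G) \<and>
      ((\<lambda>s. \<chi> k. dR k (prodw L (\<lambda>i. w i s) $ k)) has_vector_derivative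
        (- sgnpow q (Df (prodw L (\<lambda>i. w i t))) - G)) (at t within D)"
    by (auto simp: x_def has_vector_derivative_vec_nth_iff)
qed

end
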